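(* Let $(A_i,\gamma_i)_{i\in I}$ be a family of quasiordered sets with all $A_i$ nonempty, and let $j,k\in I$, $j\neq k$, be such that there exist $a_j,b_j,c_j\in A_j$ with $a_j\neq c_j$, $(a_j,c_j)\in\gamma_j$, $(a_j,b_j)\notin\gamma_j$, and such that $\gamma_k\neq A_k\times A_k$ (with $|A_k|>1$). Then the product quasiorder $\prod_{i\in I}\gamma_i$ is not a half-space on $\prod_{i\in I}A_i$.
   Context: A quasiorder on $A$ is a reflexive and transitive relation; $\Delta_A=\{(a,a)\mid a\in A\}$. A quasiorder $\alpha$ on $A$ is a half-space if there is a quasiorder $\beta$ on $A$ with $\alpha\cup\beta=A\times A$ and $\alpha\cap\beta=\Delta_A$. The direct product quasiorder is $\prod_{i\in I}\gamma_i=\{(\underline a,\underline b)\mid \underline a,\underline b\in\prod_{i\in I}A_i,\ (\underline a(i),\underline b(i))\in\gamma_i \text{ for all } i\in I\}$. *)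

theory Defs
  imports "HOL-Library.FuncSet"
begin

definition quasiorder_on :: "'a set \<Rightarrow> ('a \<times> 'a) set \<Rightarrow> bool" where
  "quasiorder_on A r \<longleftrightarrow> r \<subseteq> A \<times> A \<and> refl_on A r \<and> trans r"

definition half_space :: "'a set \<Rightarrow> ('a \<times> 'a) set \<Rightarrow> bool" where
  "half_space A \<alpha> \<longleftrightarrow> quasiorder_on A \<alpha> \<and>
     (\<exists>\<beta>. quasiorder_on A \<beta> \<and> \<alpha> \<union> \<beta> = A \<times> A \<and> \<alpha> \<inter> \<beta> = Id_on A)"

definition prod_qo :: "'i set \<Rightarrow> ('i \<Rightarrow> 'a set) \<Rightarrow> ('i \<Rightarrow> ('a \<times> 'a) set) \<Rightarrow> (('i \<Rightarrow> 'a) \<times> ('i \<Rightarrow> 'a)) set" where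
  "prod_qo I A \<gamma> = {(a, b). a \<in> PiE I A \<and> b \<in> PiE I A \<and> (\<forall>i\<in>I. (a i, b i) \<in> \<gamma> i)}"

end

(* If beta complements the half-space alpha, then two consecutive steps outside alpha are
   steps of beta, hence so is their composite; a composite that also lies in alpha is in
   alpha \<inter> beta = Id. In the product, p = (a_j, y), q = (b_j, x), r = (c_j, y) (other
   coordinates fixed, (x, y) \<notin> gamma_k) give two steps outside the product order whose
   composite p \<le> r lies in it, yet p \<noteq> r. *)
theory Submission
  imports Defs
begin

lemma half_space_eq_if_detour_outside:
  assumes "half_space A \<alpha>" and "p \<in> A" "q \<in> A" "r \<in> A"
    and "(p, q) \<notin> \<alpha>" "(q, r) \<notin> \<alpha>" "(p, r) \<in> \<alpha>"
  shows "p = r"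
proof -
  obtain \<beta> where \<beta>: "quasiorder_on A \<beta>" "\<alpha> \<union> \<beta> = A \<times> A" "\<alpha> \<inter> \<beta> = Id_on A"
    using assms(1) unfolding half_space_def by blast
  have "(p, q) \<in> \<beta>" "(q, r) \<in> \<beta>"
    using assms(2-6) \<beta>(2) by auto
  then have "(p, r) \<in> \<beta>"
    using \<beta>(1) unfolding quasiorder_on_def by (meson transD)
  then have "(p, r) \<in> Id_on A"
    using assms(7) \<beta>(3) by blast
  then show "p = r" by auto
qed

lemma prod_qo_refl:
  assumes "\<And>i. i \<in> I \<Longrightarrow> quasiorder_on (A i) (\<gamma> i)" and "e \<in> PiE I A"
  shows "(e, e) \<in> prod_qo I A \<gamma>"
  using assms unfolding prod_qo_def quasiorder_on_def by (auto dest: refl_onD)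

lemma prod_qo_fun_upd:
  assumes "(f, g) \<in> prod_qo I A \<gamma>" and "j \<in> I" "a \<in> A j" "b \<in> A j" "(a, b) \<in> \<gamma> j"
  shows "(f(j := a), g(j := b)) \<in> prod_qo I A \<gamma>"
  using assms PiE_fun_upd[of a A j f I] PiE_fun_upd[of b A j g I]
  unfolding prod_qo_def by (auto simp: insert_absorb)

lemma not_in_prod_qo:
  assumes "i \<in> I" "(f i, g i) \<notin> \<gamma> i"
  shows "(f, g) \<notin> prod_qo I A \<gamma>"
  using assms unfolding prod_qo_def by blast

theorem lemma3p1:
  fixes I :: "'i set" and A :: "'i \<Rightarrow> 'a set" and \<gamma> :: "'i \<Rightarrow> ('a \<times> 'a) set"
    and j k :: 'i and aj bj cj :: 'a
  assumes qo: "\<And>i. i \<in> I \<Longrightarrow> quasiorder_on (A i) (\<gamma> i)"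
    and ne: "\<And>i. i \<in> I \<Longrightarrow> A i \<noteq> {}"
    and jI: "j \<in> I" and kI: "k \<in> I" and jk: "j \<noteq> k"
    and abc: "aj \<in> A j" "bj \<in> A j" "cj \<in> A j"
    and ac_ne: "aj \<noteq> cj" and ac: "(aj, cj) \<in> \<gamma> j" and ab: "(aj, bj) \<notin> \<gamma> j"
    and k_nontriv: "\<gamma> k \<noteq> A k \<times> A k"
  shows "\<not> half_space (PiE I A) (prod_qo I A \<gamma>)"
proof
  assume hs: "half_space (PiE I A) (prod_qo I A \<gamma>)"
  obtain x y where xy: "x \<in> A k" "y \<in> A k" "(x, y) \<notin> \<gamma> k"
    using qo[OF kI] k_nontriv unfolding quasiorder_on_def by auto
  obtain e where e: "e \<in> PiE I A"
    using ne by (metis PiE_eq_empty_iff ex_in_conv)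
  define p where "p = e(j := aj, k := y)"
  define q where "q = e(j := bj, k := x)"
  define r where "r = e(j := cj, k := y)"
  have upd_in_PiE: "e(j := u, k := v) \<in> PiE I A" if "u \<in> A j" "v \<in> A k" for u v
  proof -
    have "e(j := u, k := v) \<in> PiE (insert k (insert j I)) A"
      using that e by (intro PiE_fun_upd)
    then show ?thesis by (simp add: insert_absorb jI kI)
  qed
  have in_PiE: "p \<in> PiE I A" "q \<in> PiE I A" "r \<in> PiE I A"
    unfolding p_def q_def r_def using abc xy by (simp_all add: upd_in_PiE)
  have "(y, y) \<in> \<gamma> k"
    using qo[OF kI] xy(2) unfolding quasiorder_on_def by (auto dest: refl_onD)
  then have "(p, r) \<in> prod_qo I A \<gamma>"
    unfolding p_def r_def
    by (intro prod_qo_fun_upd prod_qo_refl[OF qo e] jI kI abc ac xy)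
  moreover have "(p, q) \<notin> prod_qo I A \<gamma>"
    using jI ab jk by (intro not_in_prod_qo[of j]) (simp_all add: p_def q_def)
  moreover have "(q, r) \<notin> prod_qo I A \<gamma>"
    using kI xy(3) by (intro not_in_prod_qo[of k]) (simp_all add: q_def r_def)
  ultimately have "p = r"
    using half_space_eq_if_detour_outside[OF hs in_PiE] by blast
  then have "p j = r j" by simp
  then show False
    using ac_ne jk by (simp add: p_def r_def)
qed

end
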